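(* Let $\kappa\in(0,1)$ and let $d_A>0$, $\mu>1$, $d_A'>0$, $\pi_1'\in(0,1]$, $\pi_1$, $d_S$ be real numbers satisfying \[ d_S=(\mu-1)\bigl(1-e^{-\pi_1'd_A'/(\mu-1)}\bigr),\qquad d_A=(1-\pi_1')d_A'+d_S,\qquad \pi_1=\frac{d_S}{d_A}, \] together with the "cube root principle" \[ \pi_1=\kappa^{1/3},\qquad 1-e^{-\pi_1'd_A'/(\mu-1)}=\kappa^{1/3}. \] Then \[ \mu=1+d_A,\qquad d_A'=d_A\bigl(1-\kappa^{1/3}-\log(1-\kappa^{1/3})\bigr),\qquad \pi_1'=\Bigl(1-\frac{1-\kappa^{1/3}}{\log(1-\kappa^{1/3})}\Bigr)^{-1}. \]
   Context: In the paper these quantities have the interpretation: $d_A$ mean degree in the agreement graph, $d_A'$ mean agreement multi-degree, $\pi_1'$ proportion of agreement multi-edges that are sibling multi-edges, $d_S$ mean number of distinct sibling neighbours, $\mu$ mean offspring of the latent tree, $\kappa$ the average local clustering coefficient; for the statement only the displayed relations matter. *)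

theory Defs
  imports Complex_Main
begin

end

theory Submission
  imports Defs
begin

text \<open>Write \<open>c = \<kappa> powr (1/3)\<close>. The two cube-root conditions express \<open>dS\<close> both as
  \<open>c (\<mu> - 1)\<close> and as \<open>c dA\<close>, which forces \<open>\<mu> - 1 = dA\<close>. The second condition then pins
  the exponent \<open>\<pi>1' dA' / dA\<close> down to \<open>- ln (1 - c)\<close>, and the balance
  \<open>dA = (1 - \<pi>1') dA' + c dA\<close> is a linear equation that yields \<open>dA'\<close> and then \<open>\<pi>1'\<close>.\<close>

lemma neg_divide_diff_eq_inverse:
  fixes a L :: "'a :: field"
  assumes "L \<noteq> 0"
  shows "- L / (a - L) = inverse (1 - a / L)"
proof -
  have "1 - a / L = (L - a) / L"
    using assms by (simp add: field_simps)
  then show ?thesis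
    by (simp add: divide_minus_right[symmetric])
qed

lemma eq_ln_if_one_minus_exp_eq:
  fixes y c :: real
  assumes "1 - exp y = c"
  shows "y = ln (1 - c)"
  using assms by auto

theorem lemma9p1:
  fixes \<kappa> dA \<mu> dA' \<pi>1' \<pi>1 dS :: real
  assumes "0 < \<kappa>" "\<kappa> < 1"
    and "dA > 0" "\<mu> > 1" "dA' > 0" "0 < \<pi>1'" "\<pi>1' \<le> 1"
    and "dS = (\<mu> - 1) * (1 - exp (- \<pi>1' * dA' / (\<mu> - 1)))"
    and "dA = (1 - \<pi>1') * dA' + dS"
    and "\<pi>1 = dS / dA"
    and "\<pi>1 = \<kappa> powr (1/3)"
    and "1 - exp (- \<pi>1' * dA' / (\<mu> - 1)) = \<kappa> powr (1/3)"
  shows "\<mu> = 1 + dA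
    \<and> dA' = dA * (1 - \<kappa> powr (1/3) - ln (1 - \<kappa> powr (1/3)))
    \<and> \<pi>1' = inverse (1 - (1 - \<kappa> powr (1/3)) / ln (1 - \<kappa> powr (1/3)))"
proof -
  define c where "c = \<kappa> powr (1/3)"
  have "0 < c" "c < 1"
    using assms(1,2) by (simp_all add: c_def powr01_less_one)
  then have ln_neg: "ln (1 - c) < 0"
    by simp
  have "dS = (\<mu> - 1) * c"
    using assms(8,12) by (simp add: c_def)
  moreover have "dS = c * dA"
    using assms(3,10,11) by (simp add: c_def field_simps)
  ultimately have \<mu>: "\<mu> - 1 = dA"
    using \<open>0 < c\<close> by simp
  have exponent: "\<pi>1' * dA' = - ln (1 - c) * dA"
    using eq_ln_if_one_minus_exp_eq[OF assms(12)] \<mu> assms(3)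
    by (simp add: c_def field_simps)
  have "dA = dA' - \<pi>1' * dA' + c * dA"
    using assms(3,9-11) by (simp add: c_def field_simps)
  with exponent have dA': "dA' = dA * (1 - c - ln (1 - c))"
    by (simp add: algebra_simps)
  have "\<pi>1' = - ln (1 - c) * dA / dA'"
    using exponent assms(5) by (simp add: field_simps)
  also have "\<dots> = - ln (1 - c) / ((1 - c) - ln (1 - c))"
    using dA' assms(3) by simp
  also have "\<dots> = inverse (1 - (1 - c) / ln (1 - c))"
    using ln_neg by (intro neg_divide_diff_eq_inverse) simp
  finally show ?thesis
    using \<mu> dA' c_def by simp
qed

end
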